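(* Let $E=\mathbb{R}\times\mathbb{R}$, $\mu({\rm d}(x,v))=\pi_{0}({\rm d}x)\varpi({\rm d}v)$ with $\pi_{0}$ a probability on $\mathbb{R}$ and $\varpi=\mathcal{N}(0,\sigma^{2})$, $\xi(x,v)=(x,-v)$ and $Qf=f\circ\xi$. Let $\psi:E\to E$ be a measurable bijection with $\psi^{-1}=\xi\circ\psi\circ\xi$, $\psi^{0}={\rm Id}$, $\psi^{k}=\psi\circ\psi^{k-1}$. For $k\geq1$ let $\nu_{k}=\mu+\mu^{\xi\circ\psi^{k}}$ and $r_{k}(z)=\frac{{\rm d}\mu^{\xi\circ\psi^{k}}/{\rm d}\nu_{k}(z)}{{\rm d}\mu/{\rm d}\nu_{k}(z)}$ if both derivatives are positive, $r_{k}(z)=0$ otherwise. Set $\alpha_{0}=0$, $\alpha_{k}=\max\{\alpha_{k-1},\min\{1,r_{k}\}\}$, $\beta_{k}=\alpha_{k}-\alpha_{k-1}$, and for $K\geq1$, $\rho_{K}=1-\sum_{k=1}^{K}\beta_{k}$ and \[P_{K}\big((x,v);{\rm d}(y,w)\big)=\sum_{k=1}^{K}\beta_{k}(x,v)\delta_{\psi^{k}(x,v)}({\rm d}(y,w))+\rho_{K}(x,v)\delta_{\xi(x,v)}({\rm d}(y,w)).\] Then for any $g\in L^{2}(\mu)$, the map $K\mapsto\mathcal{E}(g,P_{K}Q)$ is non-decreasing.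
   Context: $\mu^{\varphi}(A)=\mu(\varphi^{-1}(A))$. $\mathcal{E}(g,T)=\langle g,({\rm Id}-T)g\rangle_{\mu}$ with $\langle f,g\rangle_{\mu}=\int fg\,{\rm d}\mu$. *)

theory Defs
  imports "HOL-Probability.Probability"
begin

type_synonym state = "real \<times> real"

definition xi :: "state \<Rightarrow> state" where
  "xi z = (fst z, - snd z)"

definition Qop :: "(state \<Rightarrow> real) \<Rightarrow> state \<Rightarrow> real" where
  "Qop f = f \<circ> xi"

definition add_measure :: "'a measure \<Rightarrow> 'a measure \<Rightarrow> 'a measure" where
  "add_measure M N = measure_of (space M) (sets M) (\<lambda>A. emeasure M A + emeasure N A)"

definition nu_k :: "state measure \<Rightarrow> (state \<Rightarrow> state) \<Rightarrow> nat \<Rightarrow> state measure" where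
  "nu_k M psi k = add_measure M (distr M M (xi \<circ> (psi ^^ k)))"

definition r_k :: "state measure \<Rightarrow> (state \<Rightarrow> state) \<Rightarrow> nat \<Rightarrow> state \<Rightarrow> ennreal" where
  "r_k M psi k z =
     (let a = RN_deriv (nu_k M psi k) (distr M M (xi \<circ> (psi ^^ k))) z;
          b = RN_deriv (nu_k M psi k) M z
      in if a > 0 \<and> b > 0 then a / b else 0)"

fun alpha_k :: "state measure \<Rightarrow> (state \<Rightarrow> state) \<Rightarrow> nat \<Rightarrow> state \<Rightarrow> real" where
  "alpha_k M psi 0 z = 0"
| "alpha_k M psi (Suc k) z =
     max (alpha_k M psi k z) (enn2real (min 1 (r_k M psi (Suc k) z)))"

definition beta_k :: "state measure \<Rightarrow> (state \<Rightarrow> state) \<Rightarrow> nat \<Rightarrow> state \<Rightarrow> real" where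
  "beta_k M psi k z = alpha_k M psi k z - alpha_k M psi (k - 1) z"

definition rho_K :: "state measure \<Rightarrow> (state \<Rightarrow> state) \<Rightarrow> nat \<Rightarrow> state \<Rightarrow> real" where
  "rho_K M psi K z = 1 - (\<Sum>k = 1..K. beta_k M psi k z)"

text \<open>Action of the kernel P_K on a function f:
  (P_K f)(z) = sum_{k=1}^K beta_k(z) f(psi^k z) + rho_K(z) f(xi z).\<close>
definition P_K :: "state measure \<Rightarrow> (state \<Rightarrow> state) \<Rightarrow> nat \<Rightarrow> (state \<Rightarrow> real) \<Rightarrow> state \<Rightarrow> real" where
  "P_K M psi K f z =
     (\<Sum>k = 1..K. beta_k M psi k z * f ((psi ^^ k) z)) + rho_K M psi K z * f (xi z)"

definition dirichlet :: "'a measure \<Rightarrow> ('a \<Rightarrow> real) \<Rightarrow> (('a \<Rightarrow> real) \<Rightarrow> 'a \<Rightarrow> real) \<Rightarrow> real" where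
  "dirichlet M g T = (\<integral>z. g z * (g z - T g z) \<partial>M)"

end

theory Submission imports Defs begin

text \<open>Write \<open>T k = xi \<circ> psi ^^ k\<close>. Then \<open>P_K (Q g) = g + (\<Sum>k=1..K. beta_k * (g \<circ> T k - g))\<close>, so
  \<open>E(g, P_K Q)\<close> is the sum over \<open>k \<le> K\<close> of \<open>\<integral> beta_k g (g - g \<circ> T k) d\<mu>\<close>, and it suffices that each
  summand is nonnegative. Reversibility makes every \<open>T k\<close> an involution with
  \<open>T k \<circ> T i \<circ> xi = T (k - i)\<close> for \<open>i \<le> k\<close>; as \<open>xi\<close> preserves \<open>\<mu>\<close>, \<open>T k\<close> preserves
  \<open>\<lambda> = \<Sum>i\<le>k. \<mu>\<^sup>T\<^sup>i\<close> and exchanges the densities \<open>f i = d\<mu>\<^sup>T\<^sup>i/d\<lambda>\<close> and \<open>f (k - i)\<close>. Since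
  \<open>r_j = f j / f 0\<close>, one computes \<open>beta_k f 0 = max 0 (min (f 0) (f k) - Max (insert 0 {f i | i. 0 < i \<and> i < k}))\<close>,
  so the measure \<open>beta_k \<mu>\<close> is \<open>T k\<close>-invariant. Finally, for a \<open>T\<close>-invariant measure \<open>\<nu>\<close> the
  cross terms cancel: \<open>\<integral> g (g - g \<circ> T) d\<nu> = \<integral> (g - g \<circ> T)\<^sup>2 d\<nu> / 2 \<ge> 0\<close>.\<close>

lemma sets_add_measure[simp, measurable_cong]: "sets (add_measure M N) = sets M"
  unfolding add_measure_def by (simp add: sets_measure_of_conv sets.space_closed sets.sigma_sets_eq)

lemma emeasure_add_measure:
  assumes "sets N = sets M" "A \<in> sets M"
  shows "emeasure (add_measure M N) A = emeasure M A + emeasure N A"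
  unfolding add_measure_def
proof (rule emeasure_measure_of_sigma)
  show "sigma_algebra (space M) (sets M)" by (rule sets.sigma_algebra_axioms)
  show "positive (sets M) (\<lambda>A. emeasure M A + emeasure N A)"
    by (simp add: positive_def)
  show "countably_additive (sets M) (\<lambda>A. emeasure M A + emeasure N A)"
    unfolding countably_additive_def
  proof (intro allI impI)
    fix F :: "nat \<Rightarrow> _" assume F: "range F \<subseteq> sets M" "disjoint_family F"
    then have "range F \<subseteq> sets N" using assms(1) by simp
    then show "(\<Sum>i. emeasure M (F i) + emeasure N (F i)) =
        emeasure M (\<Union> (range F)) + emeasure N (\<Union> (range F))"
      using suminf_emeasure[OF F] suminf_emeasure[OF _ F(2)] by (simp add: suminf_add[symmetric])
  qed
qed (use assms in auto)

lemma AE_invariant_comp: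
  assumes "T \<in> measurable L L" and "distr L L T = L" and "AE x in L. P x"
  shows "AE x in L. P (T x)"
proof -
  from assms(3) obtain N where N: "{x \<in> space L. \<not> P x} \<subseteq> N" "emeasure L N = 0" "N \<in> sets L"
    by (rule AE_E)
  have "emeasure L (T -` N \<inter> space L) = emeasure (distr L L T) N"
    using assms(1) N by (simp add: emeasure_distr)
  also have "\<dots> = 0" using assms(2) N by simp
  finally show ?thesis
    using N assms(1) by (intro AE_I[of _ _ "T -` N \<inter> space L"]) (auto simp: measurable_def)
qed

lemma density_comp_involution:
  assumes [measurable]: "T \<in> measurable L L" "f \<in> borel_measurable L"
    and inv: "distr L L T = L" and involutive: "\<And>z. z \<in> space L \<Longrightarrow> T (T z) = z"
  shows "density L (\<lambda>z. f (T z)) = distr (density L f) L T"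
proof -
  have "density L (\<lambda>z. f (T z)) = density (distr L L T) (\<lambda>z. f (T z))"
    by (simp add: inv)
  also have "\<dots> = distr (density L (\<lambda>z. f (T (T z)))) L T"
    by (rule density_distr) measurable
  also have "density L (\<lambda>z. f (T (T z))) = density L f"
    by (rule density_cong) (auto simp: involutive)
  finally show ?thesis .
qed

lemma
  fixes g :: "'a \<Rightarrow> real"
  assumes T[measurable]: "T \<in> measurable D D" and inv: "distr D D T = D"
    and [measurable]: "g \<in> borel_measurable D" and g2: "integrable D (\<lambda>z. (g z)\<^sup>2)"
  shows integrable_mult_diff_invariant: "integrable D (\<lambda>z. g z * (g z - g (T z)))"
    and integral_mult_diff_invariant_nonneg: "0 \<le> (\<integral>z. g z * (g z - g (T z)) \<partial>D)"
proof -
  have g2T: "integrable D (\<lambda>z. (g (T z))\<^sup>2)"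
    using g2 integrable_distr_eq[OF T, of "\<lambda>z. (g z)\<^sup>2"] by (simp add: inv)
  have same_integral: "(\<integral>z. (g (T z))\<^sup>2 \<partial>D) = (\<integral>z. (g z)\<^sup>2 \<partial>D)"
    using integral_distr[OF T, of "\<lambda>z. (g z)\<^sup>2"] by (simp add: inv)
  have diff2: "integrable D (\<lambda>z. (g z - g (T z))\<^sup>2)"
  proof (rule Bochner_Integration.integrable_bound)
    show "integrable D (\<lambda>z. 2 * (g z)\<^sup>2 + 2 * (g (T z))\<^sup>2)"
      using g2 g2T by simp
    have "(a - b)\<^sup>2 \<le> 2 * a\<^sup>2 + 2 * b\<^sup>2" for a b :: real
      using sum_squares_bound[of a "-b"] by (simp add: power2_eq_square algebra_simps)
    then show "AE z in D. norm ((g z - g (T z))\<^sup>2) \<le> norm (2 * (g z)\<^sup>2 + 2 * (g (T z))\<^sup>2)"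
      by simp
  qed measurable
  have split: "g z * (g z - g (T z)) = ((g z - g (T z))\<^sup>2 + ((g z)\<^sup>2 - (g (T z))\<^sup>2)) / 2" for z
    by (simp add: power2_eq_square algebra_simps)
  show "integrable D (\<lambda>z. g z * (g z - g (T z)))"
    unfolding split using diff2 g2 g2T by simp
  have "(\<integral>z. g z * (g z - g (T z)) \<partial>D) = (\<integral>z. (g z - g (T z))\<^sup>2 \<partial>D) / 2"
    unfolding split using diff2 g2 g2T same_integral by simp
  moreover have "0 \<le> (\<integral>z. (g z - g (T z))\<^sup>2 \<partial>D)"
    by (rule integral_nonneg_AE) simp
  ultimately show "0 \<le> (\<integral>z. g z * (g z - g (T z)) \<partial>D)"
    by linarith
qed

lemma distr_uminus_density_even:
  fixes f :: "real \<Rightarrow> ennreal"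
  assumes [measurable]: "f \<in> borel_measurable borel" and even: "\<And>v. f (- v) = f v"
  shows "distr (density lborel f) borel uminus = density lborel f"
proof -
  have "distr (density lborel f) borel uminus = distr (density (distr lborel borel uminus) f) lborel uminus"
    by (intro distr_cong) (simp_all add: lborel_distr_uminus)
  also have "\<dots> = density lborel (f \<circ> uminus)"
    by (rule distr_density_distr) auto
  also have "f \<circ> uminus = f"
    by (simp add: fun_eq_iff even)
  finally show ?thesis .
qed

lemma xi_xi[simp]: "xi (xi z) = z"
  by (simp add: xi_def)

lemma measurable_xi[measurable]: "xi \<in> borel_measurable borel"
  unfolding xi_def[abs_def] by (intro borel_measurable_continuous_onI continuous_intros)

lemma distr_xi_pair_measure:
  assumes M: "sets M = sets borel" and N: "sets N = sets borel" "sigma_finite_measure N"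
    and sym: "distr N borel uminus = N"
  shows "distr (M \<Otimes>\<^sub>M N) (M \<Otimes>\<^sub>M N) xi = M \<Otimes>\<^sub>M N"
proof -
  have sets_MN: "sets (M \<Otimes>\<^sub>M N) = sets (borel \<Otimes>\<^sub>M borel)"
    using sets_pair_measure_cong[OF M N(1)] .
  have "distr M borel (\<lambda>x. x) \<Otimes>\<^sub>M distr N borel uminus =
      distr (M \<Otimes>\<^sub>M N) (borel \<Otimes>\<^sub>M borel) (\<lambda>(x, y). (x, - y))"
  proof (rule pair_measure_distr)
    show "(\<lambda>x. x) \<in> measurable M borel" by (rule measurable_ident_sets[OF M])
    show "(uminus :: real \<Rightarrow> real) \<in> borel_measurable N"
      unfolding measurable_cong_sets[OF N(1) refl] by measurable
  qed (simp add: sym N(2))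
  moreover have "distr M borel (\<lambda>x. x) = M"
    by (rule distr_id2) (simp add: M)
  moreover have "distr (M \<Otimes>\<^sub>M N) (M \<Otimes>\<^sub>M N) xi =
      distr (M \<Otimes>\<^sub>M N) (borel \<Otimes>\<^sub>M borel) (\<lambda>(x, y). (x, - y))"
    by (rule distr_cong) (simp_all only: sets_MN xi_def split_beta refl)
  ultimately show ?thesis
    using sym by simp
qed

lemma psi_xi_psi:
  assumes "bij psi" and "inv psi = xi \<circ> psi \<circ> xi"
  shows "psi (xi (psi z)) = xi z"
proof -
  have "xi (psi (xi (psi z))) = z"
    using assms bij_is_inj[OF assms(1)] by (metis comp_apply inv_f_f)
  then show ?thesis
    by (metis xi_xi)
qed

lemma enn2real_min_one_ratio:
  fixes x y :: real
  assumes x: "x > 0" and y: "y \<ge> 0"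
  shows "enn2real (min 1 (let a = ennreal y / (ennreal x + ennreal y); b = ennreal x / (ennreal x + ennreal y)
            in if a > 0 \<and> b > 0 then a / b else 0)) = min 1 (y / x)"
proof -
  have s: "ennreal x + ennreal y = ennreal (x + y)"
    using x y by (simp del: ennreal_plus add: ennreal_plus[symmetric])
  have a: "ennreal y / (ennreal x + ennreal y) = ennreal (y / (x + y))"
    unfolding s by (rule divide_ennreal) (use x y in auto)
  have b: "ennreal x / (ennreal x + ennreal y) = ennreal (x / (x + y))"
    unfolding s by (rule divide_ennreal) (use x y in auto)
  have b_pos: "x / (x + y) > 0" using x y by simp
  show ?thesis
  proof (cases "y = 0")
    case True
    then show ?thesis using x unfolding a b Let_def by simp
  next
    case False
    then have a_pos: "y / (x + y) > 0" using x y by simp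
    have "ennreal (y / (x + y)) / ennreal (x / (x + y)) = ennreal ((y / (x + y)) / (x / (x + y)))"
      using a_pos b_pos by (intro divide_ennreal) auto
    also have "(y / (x + y)) / (x / (x + y)) = y / x" using x y by simp
    finally have q: "ennreal (y / (x + y)) / ennreal (x / (x + y)) = ennreal (y / x)" .
    have "min 1 (ennreal (y / x)) = ennreal (min 1 (y / x))"
      by (metis ennreal_1 ennreal_leI linorder_le_cases min.absorb1 min.absorb2)
    then show ?thesis
      unfolding a b Let_def q using a_pos b_pos x y by simp
  qed
qed

lemma Max_insert_0_insert:
  "finite (S :: real set) \<Longrightarrow> Max (insert 0 (insert v S)) = max v (Max (insert 0 S))"
  by (simp add: insert_commute[of 0 v])

lemma Max_insert_0_nonneg: "finite I \<Longrightarrow> (0 :: real) \<le> Max (insert 0 (G ` I))"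
  by (rule Max_ge) auto

lemma max_Max_min_diff:
  fixes c m :: real and F :: "nat \<Rightarrow> real"
  assumes "finite I" and "0 \<le> m" "m \<le> c" and "\<forall>i\<in>I. 0 \<le> F i"
  shows "max (Max (insert 0 ((\<lambda>i. min c (F i)) ` I))) m - Max (insert 0 ((\<lambda>i. min c (F i)) ` I))
         = max 0 (m - Max (insert 0 (F ` I)))"
proof (cases "\<exists>i\<in>I. m \<le> F i")
  case True
  then obtain i where i: "i \<in> I" "m \<le> F i" by blast
  have "m \<le> min c (F i)" using i assms by simp
  also have "\<dots> \<le> Max (insert 0 ((\<lambda>i. min c (F i)) ` I))" using assms i by (intro Max_ge) auto
  finally have A: "m \<le> Max (insert 0 ((\<lambda>i. min c (F i)) ` I))" .
  have "m \<le> Max (insert 0 (F ` I))" using assms i by (intro Max_ge_iff[THEN iffD2]) auto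
  then show ?thesis using A by simp
next
  case False
  then have "(\<lambda>i. min c (F i)) ` I = F ` I" using assms by (intro image_cong refl) auto
  then show ?thesis by simp
qed

lemma alpha_k_scaled:
  fixes x :: real and F :: "nat \<Rightarrow> real"
  assumes x: "x > 0" and F: "\<forall>j\<in>{1..k}. 0 \<le> F j"
    and r: "\<forall>j\<in>{1..k}. enn2real (min 1 (r_k M psi j z)) = min 1 (F j / x)"
  shows "j \<le> k \<Longrightarrow> alpha_k M psi j z * x = Max (insert 0 ((\<lambda>i. min x (F i)) ` {1..j}))"
proof (induction j)
  case (Suc j)
  have "max a b * x = max (a * x) (b * x)" for a b
    using x by (auto simp: max_def)
  moreover have "min 1 (F (Suc j) / x) * x = min x (F (Suc j))"
    using x by (auto simp: min_def field_simps)
  ultimately have "alpha_k M psi (Suc j) z * x = max (alpha_k M psi j z * x) (min x (F (Suc j)))"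
    using r Suc.prems by simp
  moreover have "{1..Suc j} = insert (Suc j) {1..j}" by auto
  then have "Max (insert 0 ((\<lambda>i. min x (F i)) ` {1..Suc j})) =
      max (min x (F (Suc j))) (Max (insert 0 ((\<lambda>i. min x (F i)) ` {1..j})))"
    by (simp only: image_insert Max_insert_0_insert finite_imageI finite_atLeastAtMost)
  ultimately show ?case
    using Suc by (simp add: max.commute)
qed simp

lemma sets_nu_k[simp, measurable_cong]: "sets (nu_k M psi j) = sets M"
  by (simp add: nu_k_def)

locale reversible_map = prob_space M for M :: "state measure" +
  fixes psi :: "state \<Rightarrow> state"
  assumes sets_M[measurable_cong]: "sets M = sets borel"
    and distr_xi: "distr M M xi = M"
    and psi_measurable[measurable]: "psi \<in> borel_measurable borel"
    and psi_xi_psi: "\<And>z. psi (xi (psi z)) = xi z"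
begin

lemma space_M[simp]: "space M = UNIV"
  using sets_eq_imp_space_eq[OF sets_M] by simp

lemma funpow_psi_measurable[measurable]: "psi ^^ j \<in> borel_measurable borel"
proof (induction j)
  case (Suc j)
  show ?case using measurable_comp[OF Suc.IH psi_measurable] by (simp add: comp_def)
qed simp

definition T :: "nat \<Rightarrow> state \<Rightarrow> state" where
  "T k = xi \<circ> psi ^^ k"

lemma comp_funpow_psi: "xi \<circ> psi ^^ j = T j"
  by (simp add: T_def)

lemma T_measurable[measurable]: "T k \<in> borel_measurable borel"
  unfolding T_def by measurable

lemma funpow_psi_xi: "(psi ^^ j) (xi ((psi ^^ j) z)) = xi z"
proof (induction j arbitrary: z)
  case (Suc j)
  have "(psi ^^ Suc j) (xi ((psi ^^ Suc j) z)) = psi ((psi ^^ j) (xi ((psi ^^ j) (psi z))))"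
    by (simp add: funpow_swap1)
  also have "\<dots> = xi z" using Suc psi_xi_psi by simp
  finally show ?case .
qed simp

lemma T_T[simp]: "T k (T k z) = z"
  unfolding T_def using funpow_psi_xi by simp

lemma T_T_xi: "j \<le> k \<Longrightarrow> T k (T j (xi z)) = T (k - j) z"
proof -
  assume "j \<le> k"
  then have "psi ^^ k = psi ^^ (k - j) \<circ> psi ^^ j" by (simp add: funpow_add[symmetric])
  then show ?thesis unfolding T_def using funpow_psi_xi by simp
qed

abbreviation mu :: "nat \<Rightarrow> state measure" where
  "mu j \<equiv> distr M M (T j)"

lemma mu_0: "mu 0 = M"
  using distr_xi by (simp add: T_def)

lemma distr_mu: "j \<le> k \<Longrightarrow> distr (mu j) M (T k) = mu (k - j)"
proof -
  assume jk: "j \<le> k"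
  have "distr (mu j) M (T k) = distr (distr M M xi) M (T k \<circ> T j)"
    using distr_xi by (simp add: distr_distr)
  also have "\<dots> = distr M M (T k \<circ> T j \<circ> xi)"
    by (simp add: distr_distr)
  also have "\<dots> = mu (k - j)"
    by (rule distr_cong) (simp_all add: T_T_xi[OF jk])
  finally show ?thesis .
qed

lemma emeasure_mu_UNIV: "emeasure (mu i) UNIV = 1"
  using emeasure_space_1 by (subst emeasure_distr) auto

primrec orbit_measure :: "nat \<Rightarrow> state measure" where
  "orbit_measure 0 = M"
| "orbit_measure (Suc j) = add_measure (orbit_measure j) (mu (Suc j))"

lemma sets_orbit_measure[simp, measurable_cong]: "sets (orbit_measure j) = sets M"
  by (induction j) simp_all

lemma space_orbit_measure[simp]: "space (orbit_measure j) = UNIV"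
  using sets_eq_imp_space_eq[OF sets_orbit_measure[of j]] by simp

lemma emeasure_orbit_measure:
  "A \<in> sets M \<Longrightarrow> emeasure (orbit_measure j) A = (\<Sum>i\<le>j. emeasure (mu i) A)"
  by (induction j) (simp_all add: mu_0 emeasure_add_measure)

lemma finite_measure_orbit_measure: "finite_measure (orbit_measure k)"
  by (rule finite_measureI) (simp add: emeasure_orbit_measure emeasure_mu_UNIV)

lemma absolutely_continuous_orbit_measure:
  assumes "i \<le> k" shows "absolutely_continuous (orbit_measure k) (mu i)"
  unfolding absolutely_continuous_def
proof
  fix A assume A: "A \<in> null_sets (orbit_measure k)"
  then have "A \<in> sets M" by (simp add: null_sets_def)
  moreover have "(\<Sum>j\<le>k. emeasure (mu j) A) = 0"
    using A emeasure_orbit_measure[OF \<open>A \<in> sets M\<close>, of k] by (simp add: null_setsD1)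
  ultimately show "A \<in> null_sets (mu i)" using assms by (simp add: null_sets_def)
qed

lemma distr_orbit_measure: "distr (orbit_measure k) (orbit_measure k) (T k) = orbit_measure k"
proof (rule measure_eqI)
  fix A assume "A \<in> sets (distr (orbit_measure k) (orbit_measure k) (T k))"
  then have A: "A \<in> sets M" by simp
  then have "T k -` A \<in> sets M"
    using measurable_sets[OF T_measurable, of A k] by (simp add: sets_M)
  with A have "emeasure (distr (orbit_measure k) (orbit_measure k) (T k)) A = (\<Sum>i\<le>k. emeasure (mu i) (T k -` A))"
    by (simp add: emeasure_distr emeasure_orbit_measure del: vimage_Int)
  also have "\<dots> = (\<Sum>i\<le>k. emeasure (distr (mu i) M (T k)) A)"
    using A by (simp add: emeasure_distr)
  also have "\<dots> = (\<Sum>i\<le>k. emeasure (mu (k - i)) A)"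
    by (simp add: distr_mu)
  also have "\<dots> = (\<Sum>i\<le>k. emeasure (mu i) A)"
    using sum.atLeastAtMost_rev[of "\<lambda>i. emeasure (mu i) A" 0 k] by (simp add: atLeast0AtMost)
  finally show "emeasure (distr (orbit_measure k) (orbit_measure k) (T k)) A = emeasure (orbit_measure k) A"
    using A by (simp add: emeasure_orbit_measure)
qed simp

lemma finite_measure_nu_k: "finite_measure (nu_k M psi j)"
proof (rule finite_measureI)
  have "space (nu_k M psi j) = UNIV"
    using sets_eq_imp_space_eq[OF sets_nu_k[of M psi j]] by simp
  then show "emeasure (nu_k M psi j) (space (nu_k M psi j)) \<noteq> \<infinity>"
    by (simp add: nu_k_def comp_funpow_psi emeasure_add_measure emeasure_mu_UNIV)
qed

lemma r_k_measurable[measurable]: "r_k M psi j \<in> borel_measurable M"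
  unfolding r_k_def[abs_def] Let_def comp_funpow_psi by measurable

lemma alpha_k_measurable[measurable]: "alpha_k M psi j \<in> borel_measurable M"
proof (induction j)
  case (Suc j)
  have "alpha_k M psi (Suc j) = (\<lambda>z. max (alpha_k M psi j z) (enn2real (min 1 (r_k M psi (Suc j) z))))"
    by (simp add: fun_eq_iff)
  then show ?case using Suc by simp
qed (simp add: alpha_k.simps(1)[abs_def])

lemma beta_k_measurable[measurable]: "beta_k M psi j \<in> borel_measurable M"
  unfolding beta_k_def[abs_def] by measurable

lemma alpha_k_bounds: "0 \<le> alpha_k M psi j z \<and> alpha_k M psi j z \<le> 1"
proof (induction j)
  case (Suc j)
  have "enn2real (min 1 (r_k M psi (Suc j) z)) \<le> 1"
    by (metis enn2real_1 enn2real_mono ennreal_1 min.cobounded1 ennreal_one_less_top)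
  then show ?case using Suc by (simp add: max_def)
qed simp

lemma beta_k_bounds: "0 \<le> beta_k M psi j z \<and> beta_k M psi j z \<le> 1"
proof (cases j)
  case (Suc i)
  then show ?thesis using alpha_k_bounds[of i z] alpha_k_bounds[of j z]
    by (simp add: beta_k_def max_def)
qed (simp add: beta_k_def)

end

locale reversible_map_step = reversible_map + fixes k :: nat assumes k_pos: "1 \<le> k"
begin

abbreviation L :: "state measure" where
  "L \<equiv> orbit_measure k"

abbreviation f :: "nat \<Rightarrow> state \<Rightarrow> ennreal" where
  "f i \<equiv> RN_deriv L (mu i)"

abbreviation F :: "nat \<Rightarrow> state \<Rightarrow> real" where
  "F i z \<equiv> enn2real (f i z)"

interpretation L: finite_measure L
  by (rule finite_measure_orbit_measure)

lemma density_f: "i \<le> k \<Longrightarrow> density L (f i) = mu i"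
  by (rule L.density_RN_deriv[OF absolutely_continuous_orbit_measure]) simp_all

lemma density_f_0: "density L (f 0) = M"
  using density_f[of 0] mu_0 by simp

lemma f_finite_AE: "i \<le> k \<Longrightarrow> AE z in L. f i z \<noteq> \<infinity>"
proof -
  assume i: "i \<le> k"
  have "finite_measure (mu i)" by (rule finite_measureI) (simp add: emeasure_mu_UNIV)
  then have "sigma_finite_measure (mu i)" by (rule finite_measure.sigma_finite_measure)
  then show ?thesis by (rule L.RN_deriv_finite[OF _ absolutely_continuous_orbit_measure[OF i]]) simp
qed

lemma f_T_AE: "i \<le> k \<Longrightarrow> AE z in L. f i (T k z) = f (k - i) z"
proof -
  assume i: "i \<le> k"
  have "density L (\<lambda>z. f i (T k z)) = distr (density L (f i)) L (T k)"
    by (rule density_comp_involution) (auto simp: distr_orbit_measure)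
  also have "\<dots> = distr (mu i) M (T k)"
    using density_f[OF i] by (intro distr_cong) simp_all
  also have "\<dots> = mu (k - i)" by (rule distr_mu[OF i])
  finally show ?thesis
    by (intro L.RN_deriv_unique) simp
qed

lemma nu_k_eq_density: "j \<le> k \<Longrightarrow> nu_k M psi j = density L (\<lambda>z. f 0 z + f j z)"
proof (rule measure_eqI)
  fix A assume j: "j \<le> k" and "A \<in> sets (nu_k M psi j)"
  then have A[measurable]: "A \<in> sets M" by simp
  have "emeasure (density L (\<lambda>z. f 0 z + f j z)) A = (\<integral>\<^sup>+ z. (f 0 z + f j z) * indicator A z \<partial>L)"
    by (simp add: emeasure_density)
  also have "\<dots> = (\<integral>\<^sup>+ z. f 0 z * indicator A z \<partial>L) + (\<integral>\<^sup>+ z. f j z * indicator A z \<partial>L)"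
    unfolding distrib_right by (rule nn_integral_add) measurable
  also have "\<dots> = emeasure M A + emeasure (mu j) A"
    using density_f_0 density_f[OF j] A by (simp add: emeasure_density[symmetric])
  finally show "emeasure (nu_k M psi j) A = emeasure (density L (\<lambda>z. f 0 z + f j z)) A"
    using A by (simp add: nu_k_def comp_funpow_psi emeasure_add_measure)
qed simp

lemma RN_deriv_nu_k_AE:
  assumes j: "j \<le> k" and [measurable]: "h \<in> borel_measurable M"
    and X: "density L h = X" and h_le: "\<And>z. h z \<le> f 0 z + f j z"
  shows "AE z in L. 0 < f 0 z + f j z \<longrightarrow> RN_deriv (nu_k M psi j) X z = h z / (f 0 z + f j z)"
proof -
  let ?w = "\<lambda>z. f 0 z + f j z"
  have w_finite: "AE z in L. ?w z \<noteq> \<infinity>"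
    using f_finite_AE[OF le0] f_finite_AE[OF j] by eventually_elim auto
  have "density (nu_k M psi j) (\<lambda>z. h z / ?w z) = density L (\<lambda>z. ?w z * (h z / ?w z))"
    unfolding nu_k_eq_density[OF j] by (rule density_density_eq) measurable
  also have "\<dots> = density L h"
  proof (rule density_cong)
    show "AE z in L. ?w z * (h z / ?w z) = h z"
      using w_finite
    proof eventually_elim
      case (elim z)
      show ?case
      proof (cases "?w z = 0")
        case True
        then show ?thesis using h_le[of z] by simp
      next
        case False
        then show ?thesis
          using elim by (simp add: ennreal_times_divide mult.commute ennreal_mult_divide_eq)
      qed
    qed
  qed measurable
  finally have "density (nu_k M psi j) (\<lambda>z. h z / ?w z) = X" using X by simp
  then have "AE z in nu_k M psi j. h z / ?w z = RN_deriv (nu_k M psi j) X z"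
    by (intro sigma_finite_measure.RN_deriv_unique finite_measure.sigma_finite_measure
        finite_measure_nu_k) measurable
  then have "AE z in L. 0 < ?w z \<longrightarrow> h z / ?w z = RN_deriv (nu_k M psi j) X z"
    unfolding nu_k_eq_density[OF j] by (subst (asm) AE_density) measurable
  then show ?thesis by eventually_elim (simp only: eq_commute)
qed

text \<open>\<open>r_k\<close> is defined pointwise from Radon-Nikodym derivatives, which are only determined
  almost everywhere; at regular points they take the values computed from the \<open>f i\<close>.\<close>
definition regular_point :: "state \<Rightarrow> bool" where
  "regular_point z \<longleftrightarrow> (\<forall>i\<le>k. f i z \<noteq> \<infinity>) \<and>
    (\<forall>j\<in>{1..k}. 0 < f 0 z + f j z \<longrightarrow>
       RN_deriv (nu_k M psi j) M z = f 0 z / (f 0 z + f j z) \<and>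
       RN_deriv (nu_k M psi j) (mu j) z = f j z / (f 0 z + f j z))"

lemma regular_point_AE: "AE z in L. regular_point z"
proof -
  have "AE z in L. \<forall>i\<in>{..k}. f i z \<noteq> \<infinity>"
    using f_finite_AE by (intro AE_finite_allI) auto
  moreover have "AE z in L. \<forall>j\<in>{1..k}. 0 < f 0 z + f j z \<longrightarrow>
     RN_deriv (nu_k M psi j) M z = f 0 z / (f 0 z + f j z) \<and>
     RN_deriv (nu_k M psi j) (mu j) z = f j z / (f 0 z + f j z)"
  proof (rule AE_finite_allI)
    fix j assume "j \<in> {1..k}"
    then have j: "j \<le> k" by simp
    have "AE z in L. 0 < f 0 z + f j z \<longrightarrow> RN_deriv (nu_k M psi j) M z = f 0 z / (f 0 z + f j z)"
      using j by (intro RN_deriv_nu_k_AE density_f_0) auto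
    moreover have "AE z in L. 0 < f 0 z + f j z \<longrightarrow>
        RN_deriv (nu_k M psi j) (mu j) z = f j z / (f 0 z + f j z)"
      using j by (intro RN_deriv_nu_k_AE density_f) auto
    ultimately show "AE z in L. 0 < f 0 z + f j z \<longrightarrow>
        RN_deriv (nu_k M psi j) M z = f 0 z / (f 0 z + f j z) \<and>
        RN_deriv (nu_k M psi j) (mu j) z = f j z / (f 0 z + f j z)"
      by eventually_elim auto
  qed simp
  ultimately show ?thesis unfolding regular_point_def by eventually_elim auto
qed

lemma f_eq_ennreal_F: "regular_point z \<Longrightarrow> i \<le> k \<Longrightarrow> f i z = ennreal (F i z)"
  unfolding regular_point_def by (simp add: less_top)

lemma min_one_r_k_eq:
  assumes z: "regular_point z" and pos: "F 0 z > 0" and j: "j \<in> {1..k}"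
  shows "enn2real (min 1 (r_k M psi j z)) = min 1 (F j z / F 0 z)"
proof -
  define x y where "x = F 0 z" and "y = F j z"
  have f0: "f 0 z = ennreal x" unfolding x_def by (rule f_eq_ennreal_F[OF z]) simp
  have fj: "f j z = ennreal y" unfolding y_def by (rule f_eq_ennreal_F[OF z]) (use j in simp)
  have x: "x > 0" and y: "y \<ge> 0" using pos by (simp_all add: x_def y_def)
  then have "0 < f 0 z + f j z"
    by (simp add: f0 zero_less_iff_neq_zero)
  then have "r_k M psi j z = (let a = ennreal y / (ennreal x + ennreal y);
      b = ennreal x / (ennreal x + ennreal y) in if a > 0 \<and> b > 0 then a / b else 0)"
    using z j unfolding r_k_def comp_funpow_psi regular_point_def by (simp add: f0 fj)
  then show ?thesis
    using enn2real_min_one_ratio[OF x y] by (simp only: x_def y_def)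
qed

text \<open>The density of \<open>beta_k \<mu>\<close> with respect to \<open>L\<close>; it is \<open>T k\<close>-invariant because \<open>T k\<close> exchanges
  \<open>f i\<close> and \<open>f (k - i)\<close>.\<close>
definition sym_weight :: "state \<Rightarrow> real" where
  "sym_weight z = max 0 (min (F 0 z) (F k z) - Max (insert 0 ((\<lambda>i. F i z) ` {1..<k})))"

lemma beta_k_times_F_0:
  assumes z: "regular_point z" and x: "F 0 z > 0"
  shows "beta_k M psi k z * F 0 z = sym_weight z"
proof -
  have r: "\<forall>j\<in>{1..k}. enn2real (min 1 (r_k M psi j z)) = min 1 (F j z / F 0 z)"
    using min_one_r_k_eq[OF z x] by auto
  have "\<forall>j\<in>{1..k}. 0 \<le> F j z" by simp
  note alpha = alpha_k_scaled[OF x this r]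
  let ?A = "\<lambda>I. Max (insert 0 ((\<lambda>i. min (F 0 z) (F i z)) ` I))"
  have "{1..k} = insert k {1..<k}" using k_pos by auto
  then have Max_split: "?A {1..k} = max (min (F 0 z) (F k z)) (?A {1..<k})"
    by (simp only: image_insert Max_insert_0_insert finite_imageI finite_atLeastLessThan)
  have "beta_k M psi k z * F 0 z = alpha_k M psi k z * F 0 z - alpha_k M psi (k - 1) z * F 0 z"
    unfolding beta_k_def by (simp only: left_diff_distrib)
  also have "\<dots> = ?A {1..k} - ?A {1..k - 1}"
    by (simp only: alpha[OF order_refl] alpha[OF diff_le_self])
  also have "{1..k - 1} = {1..<k}" using k_pos by auto
  also have "?A {1..k} - ?A {1..<k} = max (?A {1..<k}) (min (F 0 z) (F k z)) - ?A {1..<k}"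
    unfolding Max_split by (simp only: max.commute)
  also have "\<dots> = sym_weight z"
    unfolding sym_weight_def by (rule max_Max_min_diff) (use x in auto)
  finally show ?thesis .
qed

lemma beta_k_times_f_0:
  assumes z: "regular_point z"
  shows "f 0 z * ennreal (beta_k M psi k z) = ennreal (sym_weight z)"
proof -
  define x where "x = F 0 z"
  have f0: "f 0 z = ennreal x" unfolding x_def by (rule f_eq_ennreal_F[OF z]) simp
  show ?thesis
  proof (cases "x = 0")
    case True
    have "0 \<le> Max (insert 0 ((\<lambda>i. F i z) ` {1..<k}))"
      by (rule Max_insert_0_nonneg) simp
    then have "min (F 0 z) (F k z) - Max (insert 0 ((\<lambda>i. F i z) ` {1..<k})) \<le> 0"
      using True enn2real_nonneg[of "f k z"] unfolding x_def by linarith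
    then have "sym_weight z = 0"
      unfolding sym_weight_def by (rule max_absorb1)
    then show ?thesis using True f0 by simp
  next
    case False
    then have "x > 0" using enn2real_nonneg[of "f 0 z"] unfolding x_def by linarith
    then have "beta_k M psi k z * x = sym_weight z"
      unfolding x_def by (rule beta_k_times_F_0[OF z])
    then show ?thesis
      using f0 \<open>x > 0\<close> beta_k_bounds[of k z] by (simp add: ennreal_mult[symmetric] mult.commute)
  qed
qed

lemma sym_weight_T:
  assumes "\<forall>i\<in>{..k}. f i (T k z) = f (k - i) z"
  shows "sym_weight (T k z) = sym_weight z"
proof -
  have F: "\<And>i. i \<le> k \<Longrightarrow> F i (T k z) = F (k - i) z" using assms by simp
  have "(\<lambda>i. k - i) ` {1..<k} = {1..<k}"
  proof
    show "{1..<k} \<subseteq> (\<lambda>i. k - i) ` {1..<k}"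
    proof
      fix i assume "i \<in> {1..<k}"
      then have "i = k - (k - i)" "k - i \<in> {1..<k}" by auto
      then show "i \<in> (\<lambda>i. k - i) ` {1..<k}" by blast
    qed
  qed auto
  then have "(\<lambda>i. F i z) ` {1..<k} = (\<lambda>i. F i z) ` ((\<lambda>i. k - i) ` {1..<k})"
    by simp
  also have "\<dots> = (\<lambda>i. F (k - i) z) ` {1..<k}"
    by (simp only: image_image)
  also have "\<dots> = (\<lambda>i. F i (T k z)) ` {1..<k}"
    using F by (intro image_cong) auto
  finally have "(\<lambda>i. F i (T k z)) ` {1..<k} = (\<lambda>i. F i z) ` {1..<k}" ..
  moreover have "F 0 (T k z) = F k z" "F k (T k z) = F 0 z"
    using F[of 0] F[of k] by simp_all
  ultimately show ?thesis unfolding sym_weight_def by (simp add: min.commute)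
qed

lemma density_beta_k:
  "density M (\<lambda>z. ennreal (beta_k M psi k z)) = density L (\<lambda>z. f 0 z * ennreal (beta_k M psi k z))"
  by (subst density_f_0[symmetric], rule density_density_eq) measurable

lemma f_0_beta_k_T_AE:
  "AE z in L. f 0 (T k z) * ennreal (beta_k M psi k (T k z)) = f 0 z * ennreal (beta_k M psi k z)"
proof -
  have "AE z in L. regular_point (T k z)"
    by (rule AE_invariant_comp[OF _ distr_orbit_measure regular_point_AE]) measurable
  moreover have "AE z in L. \<forall>i\<in>{..k}. f i (T k z) = f (k - i) z"
    by (rule AE_finite_allI) (auto intro: f_T_AE)
  ultimately show ?thesis
    using regular_point_AE
  proof eventually_elim
    case (elim z)
    have "f 0 (T k z) * ennreal (beta_k M psi k (T k z)) = ennreal (sym_weight (T k z))"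
      by (rule beta_k_times_f_0[OF elim(1)])
    also have "\<dots> = f 0 z * ennreal (beta_k M psi k z)"
      unfolding sym_weight_T[OF elim(2)] by (rule beta_k_times_f_0[OF elim(3), symmetric])
    finally show ?case .
  qed
qed

lemma distr_density_beta_k:
  "distr (density M (\<lambda>z. ennreal (beta_k M psi k z))) (density M (\<lambda>z. ennreal (beta_k M psi k z))) (T k) =
    density M (\<lambda>z. ennreal (beta_k M psi k z))"
proof -
  have "distr (density L (\<lambda>z. f 0 z * ennreal (beta_k M psi k z))) L (T k) =
      density L (\<lambda>z. f 0 (T k z) * ennreal (beta_k M psi k (T k z)))"
    by (rule density_comp_involution[symmetric]) (simp_all add: distr_orbit_measure)
  also have "\<dots> = density L (\<lambda>z. f 0 z * ennreal (beta_k M psi k z))"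
    using f_0_beta_k_T_AE by (intro density_cong) measurable
  moreover have "distr (density L (\<lambda>z. f 0 z * ennreal (beta_k M psi k z)))
      (density L (\<lambda>z. f 0 z * ennreal (beta_k M psi k z))) (T k) =
      distr (density L (\<lambda>z. f 0 z * ennreal (beta_k M psi k z))) L (T k)"
    by (rule distr_cong) simp_all
  ultimately show ?thesis
    unfolding density_beta_k by simp
qed

end

context reversible_map
begin

lemma
  fixes g :: "state \<Rightarrow> real"
  assumes k: "1 \<le> k" and [measurable]: "g \<in> borel_measurable M"
    and g2: "integrable M (\<lambda>z. (g z)\<^sup>2)"
  shows integrable_beta_k_dirichlet: "integrable M (\<lambda>z. beta_k M psi k z * (g z * (g z - g (T k z))))"
    and integral_beta_k_dirichlet_nonneg: "0 \<le> (\<integral>z. beta_k M psi k z * (g z * (g z - g (T k z))) \<partial>M)"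
proof -
  interpret reversible_map_step M psi k by unfold_locales (rule k)
  let ?D = "density M (\<lambda>z. ennreal (beta_k M psi k z))"
  have "integrable M (\<lambda>z. beta_k M psi k z * (g z)\<^sup>2)"
  proof (rule Bochner_Integration.integrable_bound[OF g2])
    show "AE z in M. norm (beta_k M psi k z * (g z)\<^sup>2) \<le> norm ((g z)\<^sup>2)"
      using beta_k_bounds[of k] by (auto intro!: mult_left_le_one_le simp: abs_mult)
  qed measurable
  then have "integrable ?D (\<lambda>z. (g z)\<^sup>2)"
    using beta_k_bounds[of k] by (subst integrable_density) auto
  then have "integrable ?D (\<lambda>z. g z * (g z - g (T k z)))"
    and "0 \<le> (\<integral>z. g z * (g z - g (T k z)) \<partial>?D)"
    using distr_density_beta_k
    by (auto intro!: integrable_mult_diff_invariant integral_mult_diff_invariant_nonneg)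
  then show "integrable M (\<lambda>z. beta_k M psi k z * (g z * (g z - g (T k z))))"
    and "0 \<le> (\<integral>z. beta_k M psi k z * (g z * (g z - g (T k z))) \<partial>M)"
    using beta_k_bounds[of k] by (simp_all add: integrable_density integral_density)
qed

lemma P_K_Qop:
  "P_K M psi K (Qop h) z = h z + (\<Sum>k=1..K. beta_k M psi k z * (h (T k z) - h z))"
proof -
  have "rho_K M psi K z * h z = h z - (\<Sum>k=1..K. beta_k M psi k z * h z)"
    by (simp add: rho_K_def left_diff_distrib sum_distrib_right)
  then show ?thesis
    by (simp add: P_K_def Qop_def T_def sum_subtractf right_diff_distrib)
qed

lemma dirichlet_P_K_Qop:
  fixes g :: "state \<Rightarrow> real"
  assumes [measurable]: "g \<in> borel_measurable M" and g2: "integrable M (\<lambda>z. (g z)\<^sup>2)"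
  shows "dirichlet M g (\<lambda>h. P_K M psi K (Qop h)) =
    (\<Sum>k=1..K. \<integral>z. beta_k M psi k z * (g z * (g z - g (T k z))) \<partial>M)"
proof -
  have "g z * (g z - P_K M psi K (Qop g) z) = (\<Sum>k=1..K. beta_k M psi k z * (g z * (g z - g (T k z))))"
    for z
    by (simp add: P_K_Qop sum_distrib_left sum_negf[symmetric] algebra_simps)
  then have "dirichlet M g (\<lambda>h. P_K M psi K (Qop h)) =
      (\<integral>z. (\<Sum>k=1..K. beta_k M psi k z * (g z * (g z - g (T k z)))) \<partial>M)"
    by (simp add: dirichlet_def)
  also have "\<dots> = (\<Sum>k=1..K. \<integral>z. beta_k M psi k z * (g z * (g z - g (T k z))) \<partial>M)"
    using integrable_beta_k_dirichlet[OF _ assms] by (intro Bochner_Integration.integral_sum) auto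
  finally show ?thesis .
qed

lemma dirichlet_P_K_Qop_mono:
  fixes g :: "state \<Rightarrow> real"
  assumes "g \<in> borel_measurable M" and "integrable M (\<lambda>z. (g z)\<^sup>2)" and "K \<le> K'"
  shows "dirichlet M g (\<lambda>h. P_K M psi K (Qop h)) \<le> dirichlet M g (\<lambda>h. P_K M psi K' (Qop h))"
  unfolding dirichlet_P_K_Qop[OF assms(1,2)]
  using assms integral_beta_k_dirichlet_nonneg[OF _ assms(1,2)] by (intro sum_mono2) auto

end

theorem lemma3p12:
  fixes pi0 :: "real measure" and \<sigma> :: real
    and psi :: "state \<Rightarrow> state" and g :: "state \<Rightarrow> real"
  assumes "prob_space pi0" and "sets pi0 = sets borel"
    and "\<sigma> > 0"
    and "psi \<in> borel_measurable borel"
    and "bij psi"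
    and "inv psi = xi \<circ> psi \<circ> xi"
    and "g \<in> borel_measurable (pi0 \<Otimes>\<^sub>M density lborel (\<lambda>v. ennreal (normal_density 0 \<sigma> v)))"
    and "integrable (pi0 \<Otimes>\<^sub>M density lborel (\<lambda>v. ennreal (normal_density 0 \<sigma> v))) (\<lambda>z. (g z)\<^sup>2)"
  shows "\<forall>K L. 1 \<le> K \<longrightarrow> K \<le> L \<longrightarrow>
           dirichlet (pi0 \<Otimes>\<^sub>M density lborel (\<lambda>v. ennreal (normal_density 0 \<sigma> v))) g
             (\<lambda>f. P_K (pi0 \<Otimes>\<^sub>M density lborel (\<lambda>v. ennreal (normal_density 0 \<sigma> v))) psi K (Qop f))
           \<le> dirichlet (pi0 \<Otimes>\<^sub>M density lborel (\<lambda>v. ennreal (normal_density 0 \<sigma> v))) g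
             (\<lambda>f. P_K (pi0 \<Otimes>\<^sub>M density lborel (\<lambda>v. ennreal (normal_density 0 \<sigma> v))) psi L (Qop f))"
proof -
  let ?N = "density lborel (\<lambda>v. ennreal (normal_density 0 \<sigma> v))"
  have N: "prob_space ?N"
    using assms(3) by (rule prob_space_normal_density)
  have "distr ?N borel uminus = ?N"
    by (rule distr_uminus_density_even) (simp_all add: normal_density_def)
  then have xi_invariant: "distr (pi0 \<Otimes>\<^sub>M ?N) (pi0 \<Otimes>\<^sub>M ?N) xi = pi0 \<Otimes>\<^sub>M ?N"
    using assms(2) N by (intro distr_xi_pair_measure) (simp_all add: prob_space_imp_sigma_finite)
  have "sets (pi0 \<Otimes>\<^sub>M ?N) = sets (borel \<Otimes>\<^sub>M borel)"
    by (rule sets_pair_measure_cong[OF assms(2)]) simp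
  then have sets_borel: "sets (pi0 \<Otimes>\<^sub>M ?N) = sets borel"
    by (simp only: borel_prod)
  interpret reversible_map "pi0 \<Otimes>\<^sub>M ?N" psi
    by (rule reversible_map.intro[OF prob_space_pair[OF assms(1) N]
          reversible_map_axioms.intro[OF sets_borel xi_invariant assms(4) psi_xi_psi[OF assms(5,6)]]])
  show ?thesis
    using dirichlet_P_K_Qop_mono[OF assms(7,8)] by blast
qed

end
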